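(* Let a language model $M$ produce $L$ responses $g_1,\dots,g_L$ to a single prompt, where response $g_i$ has final answer $s_i$, and let a verifier (process reward model) $V$ assign to each $g_i$ a scalar score $p_i$. Let $\mathcal{A}=\{\alpha_1,\dots,\alpha_m\}$ (with $m\ge 2$) be the set of distinct candidate answers. For a hypothesized true answer $\alpha_k\in\mathcal{A}$, set $c_i=1$ if $s_i=\alpha_k$ and $c_i=0$ otherwise. Assume the following model of the evidence given $\alpha_k$: (i) (Score and generation independence) $P(\mathcal{P}\mid \mathcal{G},\alpha_k,V)=\prod_{i=1}^L P(p_i\mid g_i,\alpha_k,V)$ and $P(\mathcal{G}\mid \alpha_k,M)=\prod_{i=1}^L P(g_i\mid \alpha_k,M)$, where $\mathcal{G}=\{g_1,\dots,g_L\}$ and $\mathcal{P}=\{p_1,\dots,p_L\}$, and the joint likelihood factors as $P(\mathcal{G},\mathcal{P}\mid\alpha_k,M,V)=P(\mathcal{P}\mid\mathcal{G},\alpha_k,V)\,P(\mathcal{G}\mid\alpha_k,M)$; (ii) the score likelihood depends on $g_i$ and $\alpha_k$ only through the correctness indicator, i.e. $P(p_i\mid g_i,\alpha_k,V)=P(p_i\mid c_i,V)$, with $P(p_i\mid c_i=1,V)>0$ and $P(p_i\mid c_i=0,V)>0$; (iii) $P(g_i\mid\alpha_k,M)=P(s_i\mid\alpha_k,M)$, where $P(s_i=\alpha_k\mid\alpha_k,M)=q_M$ and $P(s_i=\alpha\mid\alpha_k,M)=(1-q_M)/(m-1)$ for each $\alpha\in\mathcal{A}$ with $\alpha\neq\alpha_k$,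 for some $q_M\in(0,1)$ not depending on $k$. Define the log-likelihood $\mathrm{LL}(\alpha_k)=\sum_{i=1}^L\log P(p_i\mid g_i,\alpha_k,V)+\sum_{i=1}^L\log P(g_i\mid\alpha_k,M)$. Then maximizing $\mathrm{LL}(\alpha_k)$ over $\alpha_k\in\mathcal{A}$ is equivalent to maximizing $$\mathrm{Score}(\alpha_k)=\sum_{i:\,s_i=\alpha_k} w_i,\qquad w_i=\log\frac{P(p_i\mid c_i=1,V)}{P(p_i\mid c_i=0,V)}+\log\frac{q_M\,(m-1)}{1-q_M},$$ i.e. $\arg\max_{\alpha_k\in\mathcal{A}}\mathrm{LL}(\alpha_k)=\arg\max_{\alpha_k\in\mathcal{A}}\mathrm{Score}(\alpha_k)$.
   Context: In this setting, the goal is maximum a posteriori selection of the true answer; with a uniform prior over the candidate answers in $\mathcal{A}$, this is the same as maximizing the likelihood $P(\mathcal{G},\mathcal{P}\mid\alpha_k,M,V)$. In $w_i$, the quantity $P(p_i\mid c_i=1,V)$ (resp. $P(p_i\mid c_i=0,V)$) denotes the likelihood (density) of the verifier producing score $p_i$ for a correct (resp. incorrect) response. *)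

theory Defs
  imports Complex_Main
begin

text \<open>Responses are indexed by i < L; s i is the final answer of response i.
  Pscore i a models P(p_i | g_i, a, V), Pgen i a models P(g_i | a, M).\<close>

definition LL :: "nat \<Rightarrow> (nat \<Rightarrow> 'a \<Rightarrow> real) \<Rightarrow> (nat \<Rightarrow> 'a \<Rightarrow> real) \<Rightarrow> 'a \<Rightarrow> real" where
  "LL L Pscore Pgen a = (\<Sum>i<L. ln (Pscore i a)) + (\<Sum>i<L. ln (Pgen i a))"

definition weight :: "(nat \<Rightarrow> real) \<Rightarrow> (nat \<Rightarrow> real) \<Rightarrow> real \<Rightarrow> nat \<Rightarrow> nat \<Rightarrow> real" where
  "weight f1 f0 q m i = ln (f1 i / f0 i) + ln (q * (real m - 1) / (1 - q))"

definition Score :: "nat \<Rightarrow> (nat \<Rightarrow> 'a) \<Rightarrow> (nat \<Rightarrow> real) \<Rightarrow> (nat \<Rightarrow> real) \<Rightarrow> real \<Rightarrow> nat \<Rightarrow> 'a \<Rightarrow> real" where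
  "Score L s f1 f0 q m a = (\<Sum>i\<in>{i. i < L \<and> s i = a}. weight f1 f0 q m i)"

definition argmax_on :: "'a set \<Rightarrow> ('a \<Rightarrow> real) \<Rightarrow> 'a set" where
  "argmax_on A f = {a \<in> A. \<forall>b\<in>A. f b \<le> f a}"

end

theory Submission
  imports Defs
begin

text \<open>Both likelihood factors of response i take one value when s i is the hypothesised
  answer and another otherwise. Writing the logarithm of such a two-valued factor as the
  log-ratio on the indicator plus the logarithm of the "incorrect" value turns LL a into
  the Score of a plus a baseline that does not depend on a, and adding a constant does
  not move the maximisers.\<close>

lemma ln_if_eq_log_ratio_plus_ln:
  fixes x y :: real
  assumes "x > 0" "y > 0"
  shows "ln (if b then x else y) = (if b then ln (x / y) else 0) + ln y"
  using assms by (auto simp: ln_div)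

lemma argmax_on_add_const:
  assumes "\<And>a. a \<in> A \<Longrightarrow> f a = g a + c"
  shows "argmax_on A f = argmax_on A g"
  using assms unfolding argmax_on_def by auto

lemma LL_eq_sum_log_ratios_plus_baseline:
  fixes f1 f0 :: "nat \<Rightarrow> real" and q r :: real
  assumes score: "\<And>i. i < L \<Longrightarrow> Pscore i a = (if s i = a then f1 i else f0 i)"
    and gen: "\<And>i. i < L \<Longrightarrow> Pgen i a = (if s i = a then q else r)"
    and f1_pos: "\<And>i. i < L \<Longrightarrow> f1 i > 0" and f0_pos: "\<And>i. i < L \<Longrightarrow> f0 i > 0"
    and "q > 0" "r > 0"
  shows "LL L Pscore Pgen a =
    (\<Sum>i\<in>{i. i < L \<and> s i = a}. ln (f1 i / f0 i) + ln (q / r)) + (\<Sum>i<L. ln (f0 i) + ln r)"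
proof -
  have "LL L Pscore Pgen a = (\<Sum>i<L. ln (Pscore i a) + ln (Pgen i a))"
    unfolding LL_def by (simp add: sum.distrib)
  also have "\<dots> = (\<Sum>i<L. (if s i = a then ln (f1 i / f0 i) + ln (q / r) else 0)
                          + (ln (f0 i) + ln r))"
  proof (rule sum.cong)
    fix i assume "i \<in> {..<L}"
    then have "i < L" by simp
    then show "ln (Pscore i a) + ln (Pgen i a) =
        (if s i = a then ln (f1 i / f0 i) + ln (q / r) else 0) + (ln (f0 i) + ln r)"
      using score gen f1_pos f0_pos \<open>q > 0\<close> \<open>r > 0\<close>
      by (simp add: ln_if_eq_log_ratio_plus_ln)
  qed simp
  also have "\<dots> = (\<Sum>i\<in>{i. i < L \<and> s i = a}. ln (f1 i / f0 i) + ln (q / r))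
                  + (\<Sum>i<L. ln (f0 i) + ln r)"
    by (subst sum.distrib) (simp only: sum.inter_filter[OF finite_lessThan, symmetric] lessThan_iff)
  finally show ?thesis .
qed

theorem theorem3p2:
  fixes L m :: nat
    and A :: "'a set"
    and s :: "nat \<Rightarrow> 'a"
    and f1 f0 :: "nat \<Rightarrow> real"
    and q :: real
    and Pscore Pgen :: "nat \<Rightarrow> 'a \<Rightarrow> real"
  assumes finA: "finite A" and cardA: "card A = m" and m2: "m \<ge> 2"
    and sA: "\<And>i. i < L \<Longrightarrow> s i \<in> A"
    and f1pos: "\<And>i. i < L \<Longrightarrow> f1 i > 0"
    and f0pos: "\<And>i. i < L \<Longrightarrow> f0 i > 0"
    and score_lik: "\<And>i a. i < L \<Longrightarrow> a \<in> A \<Longrightarrow>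
        Pscore i a = (if s i = a then f1 i else f0 i)"
    and q01: "0 < q" "q < 1"
    and gen_lik: "\<And>i a. i < L \<Longrightarrow> a \<in> A \<Longrightarrow>
        Pgen i a = (if s i = a then q else (1 - q) / (real m - 1))"
  shows "argmax_on A (LL L Pscore Pgen) = argmax_on A (Score L s f1 f0 q m)"
proof (rule argmax_on_add_const)
  define r where "r = (1 - q) / (real m - 1)"
  have "real m - 1 > 0" using m2 by simp
  then have r_pos: "r > 0" and "q / r = q * (real m - 1) / (1 - q)"
    using q01 unfolding r_def by simp_all
  then have weight_eq: "weight f1 f0 q m i = ln (f1 i / f0 i) + ln (q / r)" for i
    unfolding weight_def by simp
  fix a assume "a \<in> A"
  show "LL L Pscore Pgen a = Score L s f1 f0 q m a + (\<Sum>i<L. ln (f0 i) + ln r)"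
    unfolding Score_def weight_eq
    by (rule LL_eq_sum_log_ratios_plus_baseline)
      (use \<open>a \<in> A\<close> score_lik gen_lik f1pos f0pos q01 r_pos in \<open>simp_all add: r_def\<close>)
qed

end
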